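(* Let $x=(x_1,\ldots,x_n)$ and $y=(y_1,\ldots,y_m)$ be observed samples, let $\mathbb{P}^{x,y}$ be the posterior distribution of the pair $(P_1,P_2)$ given $\mathcal{D}_{n,m}=\{x,y\}$. Let $d$ be a distance between probability measures, $M=\sup_{P_1,P_2} d(P_1,P_2)\in(0,\infty]$, let $w:[0,M)\to(0,\infty]$ be a probability density function on $[0,M)$ and $W(t)=\int_0^t w(\varepsilon)\,d\varepsilon$. Define $\mathrm{WIKS}(\mathcal{D}_{n,m})=\int_0^M w(\varepsilon)\,\mathbb{P}^{x,y}(d(P_1,P_2)>\varepsilon)\,d\varepsilon$. Then: (a) $0\le \mathrm{WIKS}(\mathcal{D}_{n,m})\le 1$ for every observed sample $\mathcal{D}_{n,m}$; (b) $\mathrm{WIKS}(\mathcal{D}_{n,m})=0$ if and only if $d(P_1,P_2)=0$ $\mathbb{P}^{x,y}$-almost surely; (c) $\mathrm{WIKS}(\mathcal{D}_{n,m})=1$ if and only if $d(P_1,P_2)=M$ $\mathbb{P}^{x,y}$-almost surely; (d) WIKS is increasing with respect to $d(P_1,P_2)$: if $\mathcal{D}$ and $\mathcal{D}'$ are two observed data sets such that the posterior distribution of $d(P_1,P_2)$ given $\mathcal{D}'$ is stochastically greater than that given $\mathcal{D}$, i.e. $\mathbb{P}^{\mathcal{D}}(d(P_1,P_2)\ge t)\le \mathbb{P}^{\mathcal{D}'}(d(P_1,P_2)\ge t)$ for all $t>0$, then $\mathrm{WIKS}(\mathcal{D})\le \mathrm{WIKS}(\mathcal{D}')$.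
   Context: Bayesian two-sample setting: $(P_1,P_2)$ is a random pair of probability distributions with some prior; conditionally on $(P_1,P_2)$, $x_1,\ldots,x_n$ are i.i.d. from $P_1$ and $y_1,\ldots,y_m$ are i.i.d. from $P_2$, independently. $\mathbb{P}^{\mathcal{D}}$ denotes the posterior given data $\mathcal{D}$. *)

theory Defs
  imports "HOL-Probability.Probability"
begin

definition param_space :: "'a measure \<Rightarrow> ('a measure \<times> 'a measure) measure" where
  "param_space X = prob_algebra X \<Otimes>\<^sub>M prob_algebra X"

definition is_distance :: "'a measure \<Rightarrow> ('a measure \<Rightarrow> 'a measure \<Rightarrow> real) \<Rightarrow> bool" where
  "is_distance X d \<longleftrightarrow>
     (\<forall>P\<in>space (prob_algebra X). \<forall>Q\<in>space (prob_algebra X).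
        d P Q \<ge> 0 \<and> d P Q = d Q P \<and> (d P Q = 0 \<longleftrightarrow> P = Q)) \<and>
     (\<forall>P\<in>space (prob_algebra X). \<forall>Q\<in>space (prob_algebra X). \<forall>R\<in>space (prob_algebra X).
        d P R \<le> d P Q + d Q R)"

definition sup_dist :: "'a measure \<Rightarrow> ('a measure \<Rightarrow> 'a measure \<Rightarrow> real) \<Rightarrow> ennreal" where
  "sup_dist X d = (SUP P1\<in>space (prob_algebra X). SUP P2\<in>space (prob_algebra X). ennreal (d P1 P2))"

definition dom_w :: "ennreal \<Rightarrow> real set" where
  "dom_w M = {\<epsilon>::real. 0 \<le> \<epsilon> \<and> ennreal \<epsilon> < M}"

definition WIKS :: "('a measure \<Rightarrow> 'a measure \<Rightarrow> real) \<Rightarrow> (real \<Rightarrow> ennreal) \<Rightarrow> ennreal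
      \<Rightarrow> ('a measure \<times> 'a measure) measure \<Rightarrow> ennreal" where
  "WIKS d w M Q = (\<integral>\<^sup>+ \<epsilon>. indicator (dom_w M) \<epsilon> * w \<epsilon> *
        emeasure Q {\<theta>\<in>space Q. d (fst \<theta>) (snd \<theta>) > \<epsilon>} \<partial>lborel)"

end

theory Submission
  imports Defs
begin

(* WIKS integrates the survival function G(e) = P(d > e) of the posterior against the
   probability density w on [0,M). As 0 <= G <= 1, WIKS lies in [0,1], and it is monotone in G;
   dominance of P(d >= t) for all t > 0 passes to P(d > e) by continuity from below.
   Since w > 0 on [0,M), WIKS = 0 forces G = 0 almost everywhere on [0,M), hence, G being
   antitone, G(e) = 0 for every e > 0, i.e. d = 0 almost surely. Dually, 1 - WIKS is the
   integral of P(d <= e) against w, which vanishes iff P(d <= e) = 0 for every e < M,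
   i.e. d = M almost surely. *)

definition weighted_tail_integral ::
    "(real \<Rightarrow> ennreal) \<Rightarrow> ennreal \<Rightarrow> 't measure \<Rightarrow> ('t \<Rightarrow> real) \<Rightarrow> ennreal" where
  "weighted_tail_integral w M Q f =
     (\<integral>\<^sup>+ e. indicator (dom_w M) e * w e * emeasure Q {\<theta>\<in>space Q. e < f \<theta>} \<partial>lborel)"

lemma WIKS_eq_weighted_tail_integral:
  "WIKS d w M Q = weighted_tail_integral w M Q (\<lambda>\<theta>. d (fst \<theta>) (snd \<theta>))"
  by (simp add: WIKS_def weighted_tail_integral_def)

lemma sets_dom_w [measurable]: "dom_w M \<in> sets borel"
proof -
  have "dom_w M = {0..} \<inter> {e. ennreal e < M}" by (auto simp: dom_w_def)
  moreover have "{e::real. ennreal e < M} \<in> sets borel" by measurable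
  ultimately show ?thesis by simp
qed

lemma dom_w_downward_closed:
  assumes "q \<in> dom_w M" "0 \<le> e" "e \<le> q"
  shows "e \<in> dom_w M"
proof -
  have "ennreal e \<le> ennreal q" by (rule ennreal_leI) fact
  also have "ennreal q < M" using \<open>q \<in> dom_w M\<close> by (simp add: dom_w_def)
  finally show ?thesis using \<open>0 \<le> e\<close> by (simp add: dom_w_def)
qed

lemma dom_w_obtain_rat_greater:
  assumes "ennreal r < M"
  obtains q where "q \<in> \<rat>" "r < q" "q \<in> dom_w M"
proof -
  obtain z where z: "ennreal (max 0 r) < z" "z < M"
    using assms dense by (metis ennreal_max_0)
  then obtain s where s: "z = ennreal s" "0 \<le> s"
    by (cases z) (auto simp: top.not_eq_extremum)
  then have "max 0 r < s" using z(1) by (metis ennreal_less_iff max.cobounded1)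
  then obtain q where q: "q \<in> \<rat>" "max 0 r < q" "q < s" using Rats_dense_in_real by blast
  have "ennreal q < M" using q s z by (metis ennreal_leI less_imp_le order_le_less_trans)
  with q show ?thesis by (intro that) (auto simp: dom_w_def)
qed

lemma ennreal_add_eq_1_iff:
  fixes a b :: ennreal
  assumes "a + b = 1"
  shows "a = 1 \<longleftrightarrow> b = 0"
proof
  assume "a = 1"
  with assms have "1 + b = 1 + 0" by simp
  then show "b = 0" by (subst (asm) ennreal_add_left_cancel) simp_all
qed (use assms in simp)

lemma AE_lborel_exists_between:
  assumes "AE x in lborel. P x" "a < (b::real)"
  shows "\<exists>x. a < x \<and> x < b \<and> P x"
proof (rule ccontr)
  assume none: "\<not> ?thesis"
  from assms(1) obtain N where N: "N \<in> null_sets lborel" "{x\<in>space lborel. \<not> P x} \<subseteq> N"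
    by (metis AE_E null_setsI)
  have "{a<..<b} \<subseteq> N" using N none by auto
  then have "emeasure lborel {a<..<b} \<le> emeasure lborel N"
    by (intro emeasure_mono) (use N in auto)
  then show False using N assms(2) by (simp add: null_setsD1)
qed

lemma borel_measurable_emeasure_section:
  assumes "sigma_finite_measure Q"
    and "{x\<in>space (N \<Otimes>\<^sub>M Q). P (fst x) (snd x)} \<in> sets (N \<Otimes>\<^sub>M Q)"
  shows "(\<lambda>e. emeasure Q {\<theta>\<in>space Q. P e \<theta>}) \<in> borel_measurable N"
proof -
  have "Pair e -` {x\<in>space (N \<Otimes>\<^sub>M Q). P (fst x) (snd x)} = {\<theta>\<in>space Q. P e \<theta>}"
    if "e \<in> space N" for e
    using that by (auto simp: space_pair_measure)
  with sigma_finite_measure.measurable_emeasure_Pair[OF assms]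
  show ?thesis by (simp cong: measurable_cong)
qed

lemma borel_measurable_emeasure_level_sets:
  fixes f :: "'t \<Rightarrow> real"
  assumes "sigma_finite_measure Q" and [measurable]: "f \<in> borel_measurable Q"
  shows borel_measurable_emeasure_greater:
      "(\<lambda>e. emeasure Q {\<theta>\<in>space Q. e < f \<theta>}) \<in> borel_measurable borel"
    and borel_measurable_emeasure_less_eq:
      "(\<lambda>e. emeasure Q {\<theta>\<in>space Q. f \<theta> \<le> e}) \<in> borel_measurable borel"
  using assms(1) by (auto intro!: borel_measurable_emeasure_section)

lemma emeasure_strict_superlevel_le:
  fixes f :: "'t \<Rightarrow> real"
  assumes f: "f \<in> borel_measurable Q" "f \<in> borel_measurable Q'"
    and le: "\<And>t. e < t \<Longrightarrow> emeasure Q {\<theta>\<in>space Q. t \<le> f \<theta>} \<le> emeasure Q' {\<theta>\<in>space Q'. t \<le> f \<theta>}"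
  shows "emeasure Q {\<theta>\<in>space Q. e < f \<theta>} \<le> emeasure Q' {\<theta>\<in>space Q'. e < f \<theta>}"
proof -
  define A where "A n = {\<theta>\<in>space Q. e + 1 / Suc n \<le> f \<theta>}" for n :: nat
  have "range A \<subseteq> sets Q" unfolding A_def using f(1) by auto
  moreover have "incseq A"
  proof (rule incseq_SucI)
    show "A n \<subseteq> A (Suc n)" for n
      unfolding A_def by (auto intro: order_trans[rotated] simp: frac_le)
  qed
  moreover have "(\<Union>n. A n) = {\<theta>\<in>space Q. e < f \<theta>}"
  proof
    show "(\<Union>n. A n) \<subseteq> {\<theta>\<in>space Q. e < f \<theta>}"
      unfolding A_def by (auto intro: less_le_trans[rotated])
    show "{\<theta>\<in>space Q. e < f \<theta>} \<subseteq> (\<Union>n. A n)"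
    proof
      fix \<theta> assume \<theta>: "\<theta> \<in> {\<theta>\<in>space Q. e < f \<theta>}"
      then obtain n where "inverse (real (Suc n)) < f \<theta> - e"
        using reals_Archimedean[of "f \<theta> - e"] by auto
      with \<theta> have "\<theta> \<in> A n"
        unfolding A_def by (auto simp: inverse_eq_divide)
      then show "\<theta> \<in> (\<Union>n. A n)" by blast
    qed
  qed
  ultimately have "emeasure Q {\<theta>\<in>space Q. e < f \<theta>} = (SUP n. emeasure Q (A n))"
    by (simp add: SUP_emeasure_incseq)
  also have "\<dots> \<le> emeasure Q' {\<theta>\<in>space Q'. e < f \<theta>}"
  proof (rule SUP_least)
    fix n
    have "emeasure Q (A n) \<le> emeasure Q' {\<theta>\<in>space Q'. e + 1 / Suc n \<le> f \<theta>}"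
      unfolding A_def by (rule le) simp
    also have "\<dots> \<le> emeasure Q' {\<theta>\<in>space Q'. e < f \<theta>}"
      using f(2) by (intro emeasure_mono) (auto intro: less_le_trans[rotated])
    finally show "emeasure Q (A n) \<le> emeasure Q' {\<theta>\<in>space Q'. e < f \<theta>}" .
  qed
  finally show ?thesis .
qed

lemma weighted_tail_integral_mono:
  fixes f :: "'t \<Rightarrow> real"
  assumes "f \<in> borel_measurable Q" "f \<in> borel_measurable Q'"
    and "\<forall>t>0. emeasure Q {\<theta>\<in>space Q. t \<le> f \<theta>} \<le> emeasure Q' {\<theta>\<in>space Q'. t \<le> f \<theta>}"
  shows "weighted_tail_integral w M Q f \<le> weighted_tail_integral w M Q' f"
  unfolding weighted_tail_integral_def
proof (rule nn_integral_mono)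
  fix e
  show "indicator (dom_w M) e * w e * emeasure Q {\<theta>\<in>space Q. e < f \<theta>}
      \<le> indicator (dom_w M) e * w e * emeasure Q' {\<theta>\<in>space Q'. e < f \<theta>}"
  proof (cases "e \<in> dom_w M")
    case True
    then have "0 \<le> e" by (simp add: dom_w_def)
    with assms have "emeasure Q {\<theta>\<in>space Q. e < f \<theta>} \<le> emeasure Q' {\<theta>\<in>space Q'. e < f \<theta>}"
      by (intro emeasure_strict_superlevel_le) auto
    then show ?thesis by (intro mult_left_mono) auto
  qed simp
qed

locale weight_density =
  fixes w :: "real \<Rightarrow> ennreal" and M :: ennreal
  assumes M_pos: "0 < M"
    and w_measurable [measurable]: "w \<in> borel_measurable borel"
    and w_pos: "\<And>e. e \<in> dom_w M \<Longrightarrow> 0 < w e"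
    and w_density: "(\<integral>\<^sup>+ e. indicator (dom_w M) e * w e \<partial>lborel) = 1"
begin

lemma weighted_integral_le_1:
  fixes g :: "real \<Rightarrow> ennreal"
  assumes "\<And>e. g e \<le> 1"
  shows "(\<integral>\<^sup>+ e. indicator (dom_w M) e * w e * g e \<partial>lborel) \<le> 1"
proof -
  have "(\<integral>\<^sup>+ e. indicator (dom_w M) e * w e * g e \<partial>lborel)
      \<le> (\<integral>\<^sup>+ e. indicator (dom_w M) e * w e \<partial>lborel)"
    using assms by (intro nn_integral_mono) (auto intro: mult_left_le)
  then show ?thesis using w_density by simp
qed

lemma weighted_integral_eq_0_imp_AE:
  fixes g :: "real \<Rightarrow> ennreal"
  assumes [measurable]: "g \<in> borel_measurable borel"
    and "(\<integral>\<^sup>+ e. indicator (dom_w M) e * w e * g e \<partial>lborel) = 0"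
  shows "AE e in lborel. e \<in> dom_w M \<longrightarrow> g e = 0"
proof -
  have "(\<lambda>e. indicator (dom_w M) e * w e * g e) \<in> borel_measurable lborel"
    by measurable
  then have "AE e in lborel. indicator (dom_w M) e * w e * g e = 0"
    using assms(2) by (simp add: nn_integral_0_iff_AE)
  then show ?thesis
  proof eventually_elim
    case (elim e)
    show ?case
    proof
      assume "e \<in> dom_w M"
      with elim w_pos[OF this] show "g e = 0" by auto
    qed
  qed
qed

lemma antimono_weighted_integral_eq_0:
  fixes g :: "real \<Rightarrow> ennreal"
  assumes "g \<in> borel_measurable borel" "antimono g"
    and "(\<integral>\<^sup>+ e. indicator (dom_w M) e * w e * g e \<partial>lborel) = 0" "0 < r"
  shows "g r = 0"
proof -
  obtain q where q: "0 < q" "q \<in> dom_w M"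
    using dom_w_obtain_rat_greater[of 0 M] M_pos by (metis ennreal_0)
  have "AE e in lborel. e \<in> dom_w M \<longrightarrow> g e = 0"
    using assms(1,3) by (rule weighted_integral_eq_0_imp_AE)
  moreover have "0 < min r q" using q assms(4) by simp
  ultimately obtain e where e: "0 < e" "e < min r q" "e \<in> dom_w M \<longrightarrow> g e = 0"
    using AE_lborel_exists_between by blast
  have "e \<in> dom_w M" using dom_w_downward_closed[OF q(2), of e] e by simp
  with e have "g e = 0" by simp
  moreover have "g r \<le> g e" using e by (intro antimonoD[OF assms(2)]) simp
  ultimately show ?thesis by simp
qed

lemma mono_weighted_integral_eq_0:
  fixes g :: "real \<Rightarrow> ennreal"
  assumes "g \<in> borel_measurable borel" "mono g"
    and "(\<integral>\<^sup>+ e. indicator (dom_w M) e * w e * g e \<partial>lborel) = 0" "r \<in> dom_w M"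
  shows "g r = 0"
proof -
  have r: "0 \<le> r" "ennreal r < M" using assms(4) by (auto simp: dom_w_def)
  obtain q where q: "r < q" "q \<in> dom_w M"
    using dom_w_obtain_rat_greater[OF r(2)] by metis
  have "AE e in lborel. e \<in> dom_w M \<longrightarrow> g e = 0"
    using assms(1,3) by (rule weighted_integral_eq_0_imp_AE)
  then obtain e where e: "r < e" "e < q" "e \<in> dom_w M \<longrightarrow> g e = 0"
    using AE_lborel_exists_between q(1) by blast
  have "e \<in> dom_w M" using dom_w_downward_closed[OF q(2), of e] e r by simp
  with e have "g e = 0" by simp
  moreover have "g r \<le> g e" using e by (intro monoD[OF assms(2)]) simp
  ultimately show ?thesis by simp
qed

lemma weighted_tail_integral_le_1:
  assumes "prob_space Q"
  shows "weighted_tail_integral w M Q f \<le> 1"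
  unfolding weighted_tail_integral_def
  by (rule weighted_integral_le_1) (rule prob_space.emeasure_le_1[OF assms])

lemma weighted_tail_integral_add_lower:
  assumes Q: "prob_space Q" and [measurable]: "f \<in> borel_measurable Q"
  shows "weighted_tail_integral w M Q f
      + (\<integral>\<^sup>+ e. indicator (dom_w M) e * w e * emeasure Q {\<theta>\<in>space Q. f \<theta> \<le> e} \<partial>lborel) = 1"
proof -
  interpret prob_space Q by (rule Q)
  note level_sets = borel_measurable_emeasure_level_sets[OF prob_space_imp_sigma_finite[OF Q] assms(2)]
  have split: "emeasure Q {\<theta>\<in>space Q. e < f \<theta>} + emeasure Q {\<theta>\<in>space Q. f \<theta> \<le> e} = 1" for e
  proof -
    have "emeasure Q {\<theta>\<in>space Q. e < f \<theta>} + emeasure Q {\<theta>\<in>space Q. f \<theta> \<le> e}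
        = emeasure Q ({\<theta>\<in>space Q. e < f \<theta>} \<union> {\<theta>\<in>space Q. f \<theta> \<le> e})"
      by (intro plus_emeasure) auto
    also have "{\<theta>\<in>space Q. e < f \<theta>} \<union> {\<theta>\<in>space Q. f \<theta> \<le> e} = space Q" by auto
    finally show ?thesis by (simp add: emeasure_space_1)
  qed
  have "weighted_tail_integral w M Q f
      + (\<integral>\<^sup>+ e. indicator (dom_w M) e * w e * emeasure Q {\<theta>\<in>space Q. f \<theta> \<le> e} \<partial>lborel)
      = (\<integral>\<^sup>+ e. indicator (dom_w M) e * w e * (emeasure Q {\<theta>\<in>space Q. e < f \<theta>}
          + emeasure Q {\<theta>\<in>space Q. f \<theta> \<le> e}) \<partial>lborel)"
    unfolding weighted_tail_integral_def distrib_left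
    using level_sets by (intro nn_integral_add[symmetric]) auto
  also have "\<dots> = 1" by (simp add: split w_density)
  finally show ?thesis .
qed

lemma weighted_tail_integral_eq_0_iff:
  assumes Q: "prob_space Q" and [measurable]: "f \<in> borel_measurable Q"
    and nonneg: "AE \<theta> in Q. 0 \<le> f \<theta>"
  shows "weighted_tail_integral w M Q f = 0 \<longleftrightarrow> (AE \<theta> in Q. f \<theta> = 0)"
proof
  assume zero: "weighted_tail_integral w M Q f = 0"
  have null: "emeasure Q {\<theta>\<in>space Q. q < f \<theta>} = 0" if "0 < q" for q
  proof (rule antimono_weighted_integral_eq_0[OF _ _ _ that])
    show "(\<lambda>e. emeasure Q {\<theta>\<in>space Q. e < f \<theta>}) \<in> borel_measurable borel"
      by (rule borel_measurable_emeasure_greater[OF prob_space_imp_sigma_finite[OF Q]]) measurable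
    show "antimono (\<lambda>e. emeasure Q {\<theta>\<in>space Q. e < f \<theta>})"
      by (intro antimonoI emeasure_mono) auto
  qed (use zero in \<open>simp add: weighted_tail_integral_def\<close>)
  have "AE \<theta> in Q. f \<theta> \<le> q" if "0 < q" for q
    using null[OF that] by (subst AE_iff_measurable[of "{\<theta>\<in>space Q. q < f \<theta>}"]) auto
  then have "AE \<theta> in Q. \<forall>q\<in>\<rat> \<inter> {0<..}. f \<theta> \<le> q"
    by (subst AE_ball_countable) (auto intro: countable_rat)
  with nonneg show "AE \<theta> in Q. f \<theta> = 0"
  proof eventually_elim
    case (elim \<theta>)
    show "f \<theta> = 0"
    proof (rule ccontr)
      assume "f \<theta> \<noteq> 0"
      with elim obtain q where "q \<in> \<rat>" "0 < q" "q < f \<theta>"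
        using Rats_dense_in_real[of 0 "f \<theta>"] by auto
      with elim show False by (meson IntI greaterThan_iff not_le)
    qed
  qed
next
  assume ae: "AE \<theta> in Q. f \<theta> = 0"
  have "emeasure Q {\<theta>\<in>space Q. e < f \<theta>} = 0" if "0 \<le> e" for e
  proof -
    have "AE \<theta> in Q. \<not> e < f \<theta>" using ae by eventually_elim (use that in auto)
    then show ?thesis by (subst (asm) AE_iff_measurable[of "{\<theta>\<in>space Q. e < f \<theta>}"]) auto
  qed
  then have integrand: "indicator (dom_w M) e * w e * emeasure Q {\<theta>\<in>space Q. e < f \<theta>} = 0" for e
    by (cases "e \<in> dom_w M") (simp_all add: dom_w_def)
  show "weighted_tail_integral w M Q f = 0"
    unfolding weighted_tail_integral_def integrand by simp
qed

lemma weighted_tail_integral_eq_1_iff: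
  assumes Q: "prob_space Q" and [measurable]: "f \<in> borel_measurable Q"
    and bounded: "AE \<theta> in Q. ennreal (f \<theta>) \<le> M"
  shows "weighted_tail_integral w M Q f = 1 \<longleftrightarrow> (AE \<theta> in Q. ennreal (f \<theta>) = M)"
proof -
  let ?lower = "\<integral>\<^sup>+ e. indicator (dom_w M) e * w e * emeasure Q {\<theta>\<in>space Q. f \<theta> \<le> e} \<partial>lborel"
  have "weighted_tail_integral w M Q f + ?lower = 1"
    by (rule weighted_tail_integral_add_lower[OF Q]) measurable
  then have "weighted_tail_integral w M Q f = 1 \<longleftrightarrow> ?lower = 0"
    by (rule ennreal_add_eq_1_iff)
  also have "\<dots> \<longleftrightarrow> (AE \<theta> in Q. ennreal (f \<theta>) = M)"
  proof
    assume zero: "?lower = 0"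
    have null: "emeasure Q {\<theta>\<in>space Q. f \<theta> \<le> q} = 0" if "q \<in> dom_w M" for q
    proof (rule mono_weighted_integral_eq_0[OF _ _ zero that])
      show "(\<lambda>e. emeasure Q {\<theta>\<in>space Q. f \<theta> \<le> e}) \<in> borel_measurable borel"
        by (rule borel_measurable_emeasure_less_eq[OF prob_space_imp_sigma_finite[OF Q]]) measurable
      show "mono (\<lambda>e. emeasure Q {\<theta>\<in>space Q. f \<theta> \<le> e})"
        by (intro monoI emeasure_mono) auto
    qed
    have "AE \<theta> in Q. q < f \<theta>" if "q \<in> dom_w M" for q
      using null[OF that] by (subst AE_iff_measurable[of "{\<theta>\<in>space Q. f \<theta> \<le> q}"]) auto
    then have "AE \<theta> in Q. \<forall>q\<in>\<rat> \<inter> dom_w M. q < f \<theta>"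
      by (subst AE_ball_countable) (auto intro: countable_rat)
    with bounded show "AE \<theta> in Q. ennreal (f \<theta>) = M"
    proof eventually_elim
      case (elim \<theta>)
      show "ennreal (f \<theta>) = M"
      proof (rule ccontr)
        assume "ennreal (f \<theta>) \<noteq> M"
        with elim have "ennreal (f \<theta>) < M" by simp
        then obtain q where "q \<in> \<rat>" "f \<theta> < q" "q \<in> dom_w M"
          by (rule dom_w_obtain_rat_greater)
        with elim show False by (meson IntI less_asym)
      qed
    qed
  next
    assume ae: "AE \<theta> in Q. ennreal (f \<theta>) = M"
    have "emeasure Q {\<theta>\<in>space Q. f \<theta> \<le> e} = 0" if "e \<in> dom_w M" for e
    proof -
      have "AE \<theta> in Q. \<not> f \<theta> \<le> e"
        using ae
      proof eventually_elim
        case (elim \<theta>)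
        have "ennreal e < ennreal (f \<theta>)" using elim that by (simp add: dom_w_def)
        then show ?case by (metis ennreal_leI leD)
      qed
      then show ?thesis by (subst (asm) AE_iff_measurable[of "{\<theta>\<in>space Q. f \<theta> \<le> e}"]) auto
    qed
    then have integrand: "indicator (dom_w M) e * w e * emeasure Q {\<theta>\<in>space Q. f \<theta> \<le> e} = 0" for e
      by (cases "e \<in> dom_w M") simp_all
    show "?lower = 0" unfolding integrand by simp
  qed
  finally show ?thesis .
qed

end

lemma is_distance_nonneg:
  assumes "is_distance X d" "\<theta> \<in> space (param_space X)"
  shows "0 \<le> d (fst \<theta>) (snd \<theta>)"
  using assms by (auto simp: is_distance_def param_space_def space_pair_measure)

lemma dist_le_sup_dist:
  assumes "\<theta> \<in> space (param_space X)"
  shows "ennreal (d (fst \<theta>) (snd \<theta>)) \<le> sup_dist X d"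
proof -
  obtain P1 P2 where "\<theta> = (P1, P2)" "P1 \<in> space (prob_algebra X)" "P2 \<in> space (prob_algebra X)"
    using assms by (auto simp: param_space_def space_pair_measure)
  then show ?thesis
    unfolding sup_dist_def by (auto intro: SUP_upper2[of P1] SUP_upper2[of P2])
qed

theorem theorem2:
  fixes X :: "'a measure"
    and d :: "'a measure \<Rightarrow> 'a measure \<Rightarrow> real"
    and w :: "real \<Rightarrow> ennreal"
    and post :: "'d \<Rightarrow> ('a measure \<times> 'a measure) measure"
  assumes dist: "is_distance X d"
    and d_meas: "(\<lambda>\<theta>. d (fst \<theta>) (snd \<theta>)) \<in> borel_measurable (param_space X)"
    and M_pos: "sup_dist X d > 0"
    and w_meas: "w \<in> borel_measurable lborel"
    and w_pos: "\<And>\<epsilon>. \<epsilon> \<in> dom_w (sup_dist X d) \<Longrightarrow> w \<epsilon> > 0"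
    and w_density: "(\<integral>\<^sup>+ \<epsilon>. indicator (dom_w (sup_dist X d)) \<epsilon> * w \<epsilon> \<partial>lborel) = 1"
    and post_prob: "\<And>D. prob_space (post D)"
    and post_sets: "\<And>D. sets (post D) = sets (param_space X)"
  shows "(\<forall>D. 0 \<le> WIKS d w (sup_dist X d) (post D) \<and> WIKS d w (sup_dist X d) (post D) \<le> 1)
    \<and> (\<forall>D. WIKS d w (sup_dist X d) (post D) = 0 \<longleftrightarrow>
            (AE \<theta> in post D. d (fst \<theta>) (snd \<theta>) = 0))
    \<and> (\<forall>D. WIKS d w (sup_dist X d) (post D) = 1 \<longleftrightarrow>
            (AE \<theta> in post D. ennreal (d (fst \<theta>) (snd \<theta>)) = sup_dist X d))
    \<and> (\<forall>D D'. (\<forall>t>0. emeasure (post D) {\<theta>\<in>space (post D). d (fst \<theta>) (snd \<theta>) \<ge> t}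
                    \<le> emeasure (post D') {\<theta>\<in>space (post D'). d (fst \<theta>) (snd \<theta>) \<ge> t})
            \<longrightarrow> WIKS d w (sup_dist X d) (post D) \<le> WIKS d w (sup_dist X d) (post D'))"
proof -
  interpret weight_density w "sup_dist X d"
    using M_pos w_meas w_pos w_density by unfold_locales simp_all
  have space_post: "space (post D) = space (param_space X)" for D
    by (rule sets_eq_imp_space_eq[OF post_sets])
  have meas: "(\<lambda>\<theta>. d (fst \<theta>) (snd \<theta>)) \<in> borel_measurable (post D)" for D
    using d_meas by (simp add: measurable_cong_sets[OF post_sets refl])
  have nonneg: "AE \<theta> in post D. 0 \<le> d (fst \<theta>) (snd \<theta>)" for D
    by (rule AE_I2) (simp add: space_post is_distance_nonneg[OF dist])
  have bounded: "AE \<theta> in post D. ennreal (d (fst \<theta>) (snd \<theta>)) \<le> sup_dist X d" for D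
    by (rule AE_I2) (simp add: space_post dist_le_sup_dist)
  show ?thesis
    unfolding WIKS_eq_weighted_tail_integral
    using weighted_tail_integral_le_1[OF post_prob]
      weighted_tail_integral_eq_0_iff[OF post_prob meas nonneg]
      weighted_tail_integral_eq_1_iff[OF post_prob meas bounded]
      weighted_tail_integral_mono[OF meas meas]
    by auto
qed

end
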